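(* Let $T\in\mathbb{N}$, $\beta_1,\dots,\beta_T\in(0,1)$, $\alpha_t=1-\beta_t$, $\bar\alpha_t=\prod_{i=1}^t\alpha_i$, and let $\sigma_t\ge0$ with $1-\bar\alpha_{t-1}-\sigma_t^2\ge0$ for $t=2,\dots,T$. Fix vectors $\bm y_0,\bm f\in\mathbb{R}^d$ (here $\bm f=f_\phi(\bm c)$ is the output of a fixed pre-trained regressor at the covariate $\bm c$). Define a joint distribution of $\bm y_1,\dots,\bm y_T$ given $\bm y_0$ by $$p(\bm y_T\mid\bm y_0)=\mathcal{N}\big(\sqrt{\bar\alpha_T}\bm y_0+(1-\sqrt{\bar\alpha_T})\bm f,\ (1-\bar\alpha_T)\mathbf{I}\big)$$ and, for $t=T,\dots,2$, $p(\bm y_{t-1}\mid\bm y_t,\bm y_0)=\mathcal{N}(\bm\mu(\bm y_0,\bm y_t),\sigma_t^2\mathbf{I})$ with $$\bm\mu(\bm y_0,\bm y_t)=\sqrt{\bar\alpha_{t-1}}\bm y_0+(1-\sqrt{\bar\alpha_{t-1}})\bm f+\sqrt{1-\bar\alpha_{t-1}-\sigma_t^2}\,\frac{\bm y_t-\big(\sqrt{\bar\alpha_t}\bm y_0+(1-\sqrt{\bar\alpha_t})\bm f\big)}{\sqrt{1-\bar\alpha_t}}.$$ Then for every $t=1,\dots,T$, $$p(\bm y_t\mid\bm y_0)=\mathcal{N}\big(\sqrt{\bar\alpha_t}\bm y_0+(1-\sqrt{\bar\alpha_t})\bm f,\ (1-\bar\alpha_t)\mathbf{I}\big).$$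
   Context: This is the CARD (classification and regression diffusion) model written in the DDIM framework, where the diffusion interpolates between the data distribution and $\mathcal{N}(f_\phi(\bm c),\mathbf{I})$. *)

theory Defs
  imports "HOL-Probability.Probability"
begin

definition iso_normal :: "real^'d \<Rightarrow> real \<Rightarrow> (real^'d) measure" where
  "iso_normal m v = (if v = 0 then return lborel m
     else density lborel (\<lambda>x. \<Prod>i\<in>UNIV. normal_density (m $ i) (sqrt v) (x $ i)))"

definition alpha_bar :: "(nat \<Rightarrow> real) \<Rightarrow> nat \<Rightarrow> real" where
  "alpha_bar \<beta> t = (\<Prod>i\<in>{1..t}. 1 - \<beta> i)"

definition card_mean :: "(nat \<Rightarrow> real) \<Rightarrow> real^'d \<Rightarrow> real^'d \<Rightarrow> nat \<Rightarrow> real^'d" where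
  "card_mean \<beta> y0 f t = sqrt (alpha_bar \<beta> t) *\<^sub>R y0 + (1 - sqrt (alpha_bar \<beta> t)) *\<^sub>R f"

definition card_mu :: "(nat \<Rightarrow> real) \<Rightarrow> (nat \<Rightarrow> real) \<Rightarrow> real^'d \<Rightarrow> real^'d \<Rightarrow> nat \<Rightarrow> real^'d \<Rightarrow> real^'d" where
  "card_mu \<beta> \<sigma> y0 f t yt = card_mean \<beta> y0 f (t - 1)
     + (sqrt (1 - alpha_bar \<beta> (t - 1) - (\<sigma> t)^2) / sqrt (1 - alpha_bar \<beta> t))
       *\<^sub>R (yt - card_mean \<beta> y0 f t)"

text \<open>ddim_back T ... k is the distribution of y_{T-k} given y0 under the joint
  distribution p(y_T|y0) \<Prod>_t p(y_{t-1}|y_t,y0): it is obtained by marginalising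
  the Markov chain, i.e. composing (bind) the marginal of y_{T-k} with the kernel
  p(y_{T-k-1} | y_{T-k}, y0).\<close>
fun ddim_back :: "nat \<Rightarrow> (nat \<Rightarrow> real) \<Rightarrow> (nat \<Rightarrow> real) \<Rightarrow> real^'d \<Rightarrow> real^'d \<Rightarrow> nat \<Rightarrow> (real^'d) measure" where
  "ddim_back T \<beta> \<sigma> y0 f 0 = iso_normal (card_mean \<beta> y0 f T) (1 - alpha_bar \<beta> T)"
| "ddim_back T \<beta> \<sigma> y0 f (Suc k) =
     ddim_back T \<beta> \<sigma> y0 f k \<bind> (\<lambda>yt. iso_normal (card_mu \<beta> \<sigma> y0 f (T - k) yt) ((\<sigma> (T - k))^2))"

definition ddim_marginal :: "nat \<Rightarrow> (nat \<Rightarrow> real) \<Rightarrow> (nat \<Rightarrow> real) \<Rightarrow> real^'d \<Rightarrow> real^'d \<Rightarrow> nat \<Rightarrow> (real^'d) measure" where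
  "ddim_marginal T \<beta> \<sigma> y0 f t = ddim_back T \<beta> \<sigma> y0 f (T - t)"

end

theory Submission
  imports Defs
begin

text \<open>The reverse kernel at step t is Gaussian with a mean that is affine in y_t, namely
  m_(t-1) + c (y_t - m_t) with c = sqrt (1 - abar_(t-1) - sigma_t^2) / sqrt (1 - abar_t),
  where m_t is the claimed mean. Mixing N(m_t, (1 - abar_t) I) over such a kernel gives
  N(m_(t-1), c^2 (1 - abar_t) + sigma_t^2) = N(m_(t-1), (1 - abar_(t-1)) I): coordinatewise this
  is a convolution of two centred Gaussians, and for sigma_t = 0 an affine change of variables.
  Backward induction from t = T then yields every marginal.\<close>

lemma bind_density_density:
  assumes M: "sigma_finite_measure M" and N: "sigma_finite_measure N" and ne: "space M \<noteq> {}"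
    and [measurable]: "p \<in> borel_measurable M" "case_prod q \<in> borel_measurable (M \<Otimes>\<^sub>M N)"
    and sub: "\<And>y. y \<in> space M \<Longrightarrow> subprob_space (density N (q y))"
  shows "density M p \<bind> (\<lambda>y. density N (q y)) = density N (\<lambda>x. \<integral>\<^sup>+y. p y * q y x \<partial>M)"
proof -
  interpret pair_sigma_finite M N
    using M N by (simp add: pair_sigma_finite_def)
  have emeasure_q: "emeasure (density N (q y)) A = (\<integral>\<^sup>+x. q y x * indicator A x \<partial>N)"
    if [measurable]: "y \<in> space M" "A \<in> sets N" for y A
    by (simp add: emeasure_density)
  have kernel: "(\<lambda>y. density N (q y)) \<in> measurable (density M p) (subprob_algebra N)"
  proof (rule measurable_subprob_algebra)
    fix A assume [measurable]: "A \<in> sets N"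
    have "(\<lambda>y. \<integral>\<^sup>+x. q y x * indicator A x \<partial>N) \<in> borel_measurable M"
      by measurable
    then show "(\<lambda>y. emeasure (density N (q y)) A) \<in> borel_measurable (density M p)"
      by (simp add: emeasure_q cong: measurable_cong)
  qed (use sub in simp_all)
  show ?thesis
  proof (rule measure_eqI)
    show "sets (density M p \<bind> (\<lambda>y. density N (q y))) = sets (density N (\<lambda>x. \<integral>\<^sup>+y. p y * q y x \<partial>M))"
      using kernel ne by (simp add: sets_bind[where N=N])
  next
    fix A assume "A \<in> sets (density M p \<bind> (\<lambda>y. density N (q y)))"
    then have [measurable]: "A \<in> sets N"
      using kernel ne by (simp add: sets_bind[where N=N])
    have "emeasure (density M p \<bind> (\<lambda>y. density N (q y))) A
        = (\<integral>\<^sup>+y. p y * (\<integral>\<^sup>+x. q y x * indicator A x \<partial>N) \<partial>M)"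
      using kernel ne
      by (simp add: emeasure_bind[where N=N] nn_integral_density emeasure_q cong: nn_integral_cong)
    also have "\<dots> = (\<integral>\<^sup>+y. (\<integral>\<^sup>+x. p y * q y x * indicator A x \<partial>N) \<partial>M)"
    proof (rule nn_integral_cong)
      fix y assume [measurable]: "y \<in> space M"
      show "p y * (\<integral>\<^sup>+x. q y x * indicator A x \<partial>N) = (\<integral>\<^sup>+x. p y * q y x * indicator A x \<partial>N)"
        by (subst nn_integral_cmult[symmetric]) (measurable, simp add: mult.assoc)
    qed
    also have "\<dots> = (\<integral>\<^sup>+x. (\<integral>\<^sup>+y. p y * q y x \<partial>M) * indicator A x \<partial>N)"
    proof (subst Fubini'[symmetric], measurable, rule nn_integral_cong)
      fix x assume [measurable]: "x \<in> space N"
      show "(\<integral>\<^sup>+y. p y * q y x * indicator A x \<partial>M) = (\<integral>\<^sup>+y. p y * q y x \<partial>M) * indicator A x"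
        by (rule nn_integral_multc) measurable
    qed
    also have "\<dots> = emeasure (density N (\<lambda>x. \<integral>\<^sup>+y. p y * q y x \<partial>M)) A"
      by (simp add: emeasure_density)
    finally show "emeasure (density M p \<bind> (\<lambda>y. density N (q y))) A
        = emeasure (density N (\<lambda>x. \<integral>\<^sup>+y. p y * q y x \<partial>M)) A" .
  qed
qed

lemma distr_density_lborel_affine:
  fixes t :: "'a::euclidean_space"
  assumes c: "c \<noteq> 0" and [measurable]: "g \<in> borel_measurable borel"
  shows "distr (density lborel (\<lambda>y. ennreal (\<bar>c\<bar> ^ DIM('a)) * g (t + c *\<^sub>R y))) lborel (\<lambda>y. t + c *\<^sub>R y)
       = density lborel g"
proof -
  have "density lborel g
      = density (density (distr lborel borel (\<lambda>y. t + c *\<^sub>R y)) (\<lambda>_. ennreal (\<bar>c\<bar> ^ DIM('a)))) g"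
    using lborel_affine[OF c, of t] by (rule arg_cong)
  also have "\<dots> = density (distr lborel borel (\<lambda>y. t + c *\<^sub>R y)) (\<lambda>x. ennreal (\<bar>c\<bar> ^ DIM('a)) * g x)"
    by (rule density_density_eq) simp_all
  also have "\<dots> = distr (density lborel (\<lambda>y. ennreal (\<bar>c\<bar> ^ DIM('a)) * g (t + c *\<^sub>R y))) borel (\<lambda>y. t + c *\<^sub>R y)"
    by (rule density_distr) simp_all
  also have "\<dots> = distr (density lborel (\<lambda>y. ennreal (\<bar>c\<bar> ^ DIM('a)) * g (t + c *\<^sub>R y))) lborel (\<lambda>y. t + c *\<^sub>R y)"
    by (rule distr_cong) simp_all
  finally show ?thesis ..
qed

lemma nn_integral_normal_density:
  "0 < \<sigma> \<Longrightarrow> (\<integral>\<^sup>+x. ennreal (normal_density \<mu> \<sigma> x) \<partial>lborel) = 1"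
  by (subst nn_integral_eq_integral) auto

lemma normal_density_affine_change:
  fixes c :: real
  assumes "c \<noteq> 0"
  shows "normal_density \<mu> \<sigma> x = \<bar>c\<bar> * normal_density a (\<bar>c\<bar> * \<sigma>) (a + c * (x - \<mu>))"
proof -
  have "sqrt (2 * pi * (\<bar>c\<bar> * \<sigma>)\<^sup>2) = \<bar>c\<bar> * sqrt (2 * pi * \<sigma>\<^sup>2)"
    by (simp add: power_mult_distrib real_sqrt_mult)
  moreover have "(c * (x - \<mu>))\<^sup>2 / (2 * (\<bar>c\<bar> * \<sigma>)\<^sup>2) = (x - \<mu>)\<^sup>2 / (2 * \<sigma>\<^sup>2)"
    using assms by (simp add: power_mult_distrib)
  ultimately show ?thesis
    using assms by (simp add: normal_density_def)
qed

lemma nn_integral_normal_density_mixture: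
  assumes \<sigma>: "0 < \<sigma>" and s: "0 < s"
  shows "(\<integral>\<^sup>+t. ennreal (normal_density \<mu> \<sigma> t * normal_density (a + c * (t - \<mu>)) s x) \<partial>lborel)
       = ennreal (normal_density a (sqrt (c\<^sup>2 * \<sigma>\<^sup>2 + s\<^sup>2)) x)"
proof (cases "c = 0")
  case True
  then show ?thesis
    using \<sigma> s by (simp add: ennreal_mult' nn_integral_multc nn_integral_normal_density)
next
  case False
  \<comment> \<open>Substituting t = mu + u / c turns the integral into a convolution of centred Gaussians.\<close>
  let ?F = "\<lambda>t. ennreal (normal_density \<mu> \<sigma> t * normal_density (a + c * (t - \<mu>)) s x)"
  have "integral\<^sup>N lborel ?F = \<bar>1 / c\<bar> * (\<integral>\<^sup>+u. ?F (\<mu> + (1 / c) * u) \<partial>lborel)"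
    using False by (intro nn_integral_real_affine) (auto simp: normal_density_def)
  also have "(\<lambda>u. ?F (\<mu> + (1 / c) * u))
      = (\<lambda>u. \<bar>c\<bar> * ennreal (normal_density 0 s (x - a - u) * normal_density 0 (\<bar>c\<bar> * \<sigma>) u))"
  proof
    fix u
    have "normal_density \<mu> \<sigma> (\<mu> + (1 / c) * u) = \<bar>c\<bar> * normal_density 0 (\<bar>c\<bar> * \<sigma>) u"
      using normal_density_affine_change[OF False, of \<mu> \<sigma> _ 0] False by simp
    moreover have "normal_density (a + c * (\<mu> + (1 / c) * u - \<mu>)) s x = normal_density 0 s (x - a - u)"
      using False by (simp add: normal_density_def power2_commute algebra_simps)
    ultimately show "?F (\<mu> + (1 / c) * u)
        = \<bar>c\<bar> * ennreal (normal_density 0 s (x - a - u) * normal_density 0 (\<bar>c\<bar> * \<sigma>) u)"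
      by (simp add: ennreal_mult' mult_ac)
  qed
  also have "\<bar>1 / c\<bar> * integral\<^sup>N lborel \<dots>
      = (\<integral>\<^sup>+u. ennreal (normal_density 0 s (x - a - u) * normal_density 0 (\<bar>c\<bar> * \<sigma>) u) \<partial>lborel)"
    using False by (subst nn_integral_cmult) (simp_all add: ennreal_mult[symmetric] mult.assoc[symmetric])
  also have "\<dots> = normal_density 0 (sqrt (s\<^sup>2 + (\<bar>c\<bar> * \<sigma>)\<^sup>2)) (x - a)"
    using False \<sigma> s conv_normal_density_zero_mean[of s "\<bar>c\<bar> * \<sigma>"]
    by (simp add: fun_eq_iff)
  also have "\<dots> = normal_density a (sqrt (c\<^sup>2 * \<sigma>\<^sup>2 + s\<^sup>2)) x"
    by (simp add: normal_density_def power_mult_distrib add.commute)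
  finally show ?thesis .
qed

lemma prod_Basis_vec: "(\<Prod>b\<in>(Basis :: (real^'n) set). g b) = (\<Prod>i\<in>UNIV. g (axis i 1))"
proof -
  have B: "(Basis :: (real^'n) set) = (\<lambda>i. axis i 1) ` UNIV"
    by (auto simp: Basis_vec_def)
  have "inj (\<lambda>i. axis i 1 :: real^'n)"
    by (simp add: inj_on_def axis_eq_axis)
  then show ?thesis
    unfolding B by (simp add: prod.reindex)
qed

lemma borel_measurable_vec_nth [measurable]: "(\<lambda>x::real^'n. x $ i) \<in> borel_measurable borel"
  by (intro borel_measurable_continuous_onI continuous_on_component continuous_on_id)

definition iso_normal_density :: "real^'d \<Rightarrow> real \<Rightarrow> real^'d \<Rightarrow> real" where
  "iso_normal_density m v x = (\<Prod>i\<in>UNIV. normal_density (m $ i) (sqrt v) (x $ i))"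

lemma iso_normal_density_nonneg [simp]: "0 \<le> iso_normal_density m v x"
  by (simp add: iso_normal_density_def prod_nonneg)

lemma borel_measurable_iso_normal_density [measurable (raw)]:
  assumes "m \<in> borel_measurable M" "x \<in> borel_measurable M"
  shows "(\<lambda>z. iso_normal_density (m z) v (x z)) \<in> borel_measurable M"
  unfolding iso_normal_density_def normal_density_def using assms by measurable

lemma iso_normal_density_prod_Basis:
  "iso_normal_density m v x = (\<Prod>b\<in>Basis. normal_density (m \<bullet> b) (sqrt v) (x \<bullet> b))"
  by (simp add: iso_normal_density_def prod_Basis_vec inner_axis)

lemma iso_normal_eq_density:
  "0 < v \<Longrightarrow> iso_normal m v = density lborel (\<lambda>x. ennreal (iso_normal_density m v x))"
  by (simp add: iso_normal_def iso_normal_density_def)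

lemma iso_normal_zero [simp]: "iso_normal m 0 = return lborel m"
  by (simp add: iso_normal_def)

lemma nn_integral_iso_normal_density:
  fixes m :: "real^'d"
  assumes "0 < v"
  shows "(\<integral>\<^sup>+x. ennreal (iso_normal_density m v x) \<partial>lborel) = 1"
proof -
  have "(\<integral>\<^sup>+x. ennreal (iso_normal_density m v x) \<partial>lborel)
      = (\<integral>\<^sup>+x. (\<Prod>b\<in>Basis. ennreal (normal_density (m \<bullet> b) (sqrt v) (x \<bullet> b))) \<partial>lborel)"
    by (simp add: iso_normal_density_prod_Basis prod_ennreal)
  also have "\<dots> = (\<Prod>b\<in>(Basis :: (real^'d) set). \<integral>\<^sup>+t. ennreal (normal_density (m \<bullet> b) (sqrt v) t) \<partial>lborel)"
    by (rule nn_integral_lborel_prod) auto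
  finally show ?thesis
    using assms by (simp add: nn_integral_normal_density)
qed

lemma prob_space_iso_normal: "0 < v \<Longrightarrow> prob_space (iso_normal m v)"
  by (rule prob_spaceI) (simp add: iso_normal_eq_density emeasure_density nn_integral_iso_normal_density)

lemma nn_integral_iso_normal_density_mixture:
  fixes m a x :: "real^'d"
  assumes v: "0 < v" and w: "0 < w"
  shows "(\<integral>\<^sup>+y. ennreal (iso_normal_density m v y * iso_normal_density (a + c *\<^sub>R (y - m)) w x) \<partial>lborel)
       = ennreal (iso_normal_density a (c\<^sup>2 * v + w) x)"
proof -
  define F where "F b t = ennreal (normal_density (m \<bullet> b) (sqrt v) t
      * normal_density (a \<bullet> b + c * (t - m \<bullet> b)) (sqrt w) (x \<bullet> b))" for b :: "real^'d" and t
  have "(\<integral>\<^sup>+y. ennreal (iso_normal_density m v y * iso_normal_density (a + c *\<^sub>R (y - m)) w x) \<partial>lborel)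
      = (\<integral>\<^sup>+y. (\<Prod>b\<in>Basis. F b (y \<bullet> b)) \<partial>lborel)"
    by (simp add: F_def iso_normal_density_prod_Basis prod_ennreal prod.distrib algebra_simps)
  also have "\<dots> = (\<Prod>b\<in>Basis. \<integral>\<^sup>+t. F b t \<partial>lborel)"
    by (rule nn_integral_lborel_prod) (auto simp: F_def normal_density_def)
  also have "\<dots> = (\<Prod>b\<in>Basis. ennreal (normal_density (a \<bullet> b) (sqrt (c\<^sup>2 * v + w)) (x \<bullet> b)))"
    using v w by (simp add: F_def nn_integral_normal_density_mixture)
  finally show ?thesis
    by (simp add: iso_normal_density_prod_Basis prod_ennreal)
qed

lemma bind_iso_normal_affine_density:
  fixes m a :: "real^'d"
  assumes v: "0 < v" and w: "0 < w"
  shows "iso_normal m v \<bind> (\<lambda>y. iso_normal (a + c *\<^sub>R (y - m)) w) = iso_normal a (c\<^sup>2 * v + w)"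
proof -
  have "iso_normal m v \<bind> (\<lambda>y. iso_normal (a + c *\<^sub>R (y - m)) w)
      = density lborel (\<lambda>x. \<integral>\<^sup>+y. ennreal (iso_normal_density m v y)
          * ennreal (iso_normal_density (a + c *\<^sub>R (y - m)) w x) \<partial>lborel)"
    using v w prob_space_iso_normal[OF w]
    unfolding iso_normal_eq_density[OF v] iso_normal_eq_density[OF w]
    by (intro bind_density_density) (auto intro: prob_space_imp_subprob_space lborel.sigma_finite_measure_axioms)
  also have "\<dots> = iso_normal a (c\<^sup>2 * v + w)"
    using v w by (simp add: ennreal_mult[symmetric] nn_integral_iso_normal_density_mixture
        iso_normal_eq_density add_nonneg_pos)
  finally show ?thesis .
qed

lemma iso_normal_density_affine:
  fixes m a y :: "real^'d"
  assumes c: "c \<noteq> 0"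
  shows "iso_normal_density m v y = \<bar>c\<bar> ^ CARD('d) * iso_normal_density a (c\<^sup>2 * v) (a + c *\<^sub>R (y - m))"
proof -
  have "sqrt (c\<^sup>2 * v) = \<bar>c\<bar> * sqrt v"
    by (simp add: real_sqrt_mult)
  then have "normal_density (m $ i) (sqrt v) (y $ i)
      = \<bar>c\<bar> * normal_density (a $ i) (sqrt (c\<^sup>2 * v)) ((a + c *\<^sub>R (y - m)) $ i)" for i
    using normal_density_affine_change[OF c] by simp
  then show ?thesis
    by (simp add: iso_normal_density_def prod.distrib)
qed

lemma distr_iso_normal_affine:
  fixes m a :: "real^'d"
  assumes c: "c \<noteq> 0" and v: "0 < v"
  shows "distr (iso_normal m v) lborel (\<lambda>y. a + c *\<^sub>R (y - m)) = iso_normal a (c\<^sup>2 * v)"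
proof -
  let ?t = "a - c *\<^sub>R m" and ?g = "\<lambda>x. ennreal (iso_normal_density a (c\<^sup>2 * v) x)"
  have "iso_normal m v = density lborel (\<lambda>y. ennreal (\<bar>c\<bar> ^ DIM(real^'d)) * ?g (?t + c *\<^sub>R y))"
    using iso_normal_density_affine[OF c, of m v _ a] v
    by (simp add: iso_normal_eq_density ennreal_mult algebra_simps)
  moreover have "(\<lambda>y. a + c *\<^sub>R (y - m)) = (\<lambda>y. ?t + c *\<^sub>R y)"
    by (simp add: algebra_simps)
  ultimately have "distr (iso_normal m v) lborel (\<lambda>y. a + c *\<^sub>R (y - m)) = density lborel ?g"
    using distr_density_lborel_affine[OF c, of ?g ?t] by simp
  then show ?thesis
    using c v by (simp add: iso_normal_eq_density)
qed

lemma bind_iso_normal_affine: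
  fixes m a :: "real^'d"
  assumes v: "0 < v" and w: "0 \<le> w" and nondegenerate: "0 < c\<^sup>2 * v + w"
  shows "iso_normal m v \<bind> (\<lambda>y. iso_normal (a + c *\<^sub>R (y - m)) w) = iso_normal a (c\<^sup>2 * v + w)"
proof (cases "w = 0")
  case True
  with nondegenerate have "c \<noteq> 0"
    by auto
  have sets: "sets (iso_normal m v) = sets borel"
    using v by (simp add: iso_normal_eq_density)
  then have "space (iso_normal m v) \<noteq> {}"
    by (simp add: sets_eq_imp_space_eq)
  moreover have "(\<lambda>y. a + c *\<^sub>R (y - m)) \<in> measurable (iso_normal m v) lborel"
    by (subst measurable_cong_sets[OF sets sets_lborel]) measurable
  ultimately have "iso_normal m v \<bind> (\<lambda>y. return lborel (a + c *\<^sub>R (y - m)))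
      = distr (iso_normal m v) lborel (\<lambda>y. a + c *\<^sub>R (y - m))"
    by (rule bind_return_distr')
  then show ?thesis
    using True distr_iso_normal_affine[OF \<open>c \<noteq> 0\<close> v] by simp
next
  case False
  with w v show ?thesis
    by (simp add: bind_iso_normal_affine_density)
qed

lemma alpha_bar_Suc: "alpha_bar \<beta> (Suc t) = alpha_bar \<beta> t * (1 - \<beta> (Suc t))"
  by (simp add: alpha_bar_def atLeastAtMostSuc_conv mult.commute)

lemma alpha_bar_less_one:
  assumes \<beta>: "\<And>i. 1 \<le> i \<Longrightarrow> i \<le> t \<Longrightarrow> 0 < \<beta> i \<and> \<beta> i < 1" and t: "1 \<le> t"
  shows "alpha_bar \<beta> t < 1"
proof -
  obtain s where s: "t = Suc s"
    using t by (cases t) auto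
  have "0 \<le> 1 - \<beta> i \<and> 1 - \<beta> i \<le> 1" if "i \<in> {1..s}" for i
    using \<beta>[of i] s that by auto
  then have "0 \<le> alpha_bar \<beta> s" "alpha_bar \<beta> s \<le> 1"
    unfolding alpha_bar_def by (auto intro: prod_nonneg prod_le_1)
  moreover have "0 < \<beta> t" "\<beta> t < 1"
    using \<beta> t by auto
  ultimately have "alpha_bar \<beta> s * (1 - \<beta> t) \<le> 1 - \<beta> t"
    by (intro mult_left_le_one_le) auto
  also have "\<dots> < 1"
    using \<open>0 < \<beta> t\<close> by simp
  finally show ?thesis
    by (simp add: s alpha_bar_Suc)
qed

lemma bind_card_mu_kernel:
  assumes t: "alpha_bar \<beta> t < 1" and t': "alpha_bar \<beta> (t - 1) < 1"
    and \<sigma>: "(\<sigma> t)\<^sup>2 \<le> 1 - alpha_bar \<beta> (t - 1)"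
  shows "iso_normal (card_mean \<beta> y0 f t) (1 - alpha_bar \<beta> t) \<bind> (\<lambda>y. iso_normal (card_mu \<beta> \<sigma> y0 f t y) ((\<sigma> t)\<^sup>2))
       = iso_normal (card_mean \<beta> y0 f (t - 1)) (1 - alpha_bar \<beta> (t - 1))"
proof -
  define c where "c = sqrt (1 - alpha_bar \<beta> (t - 1) - (\<sigma> t)\<^sup>2) / sqrt (1 - alpha_bar \<beta> t)"
  have variance: "c\<^sup>2 * (1 - alpha_bar \<beta> t) + (\<sigma> t)\<^sup>2 = 1 - alpha_bar \<beta> (t - 1)"
    using t \<sigma> by (simp add: c_def power_divide)
  have "card_mu \<beta> \<sigma> y0 f t = (\<lambda>y. card_mean \<beta> y0 f (t - 1) + c *\<^sub>R (y - card_mean \<beta> y0 f t))"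
    by (simp add: card_mu_def c_def fun_eq_iff)
  then show ?thesis
    using bind_iso_normal_affine[of "1 - alpha_bar \<beta> t" "(\<sigma> t)\<^sup>2" c] t t' by (simp add: variance)
qed

lemma ddim_back_eq_iso_normal:
  assumes \<beta>: "\<And>t. 1 \<le> t \<Longrightarrow> t \<le> T \<Longrightarrow> 0 < \<beta> t \<and> \<beta> t < 1"
    and \<sigma>: "\<And>t. 2 \<le> t \<Longrightarrow> t \<le> T \<Longrightarrow> 0 \<le> 1 - alpha_bar \<beta> (t - 1) - (\<sigma> t)\<^sup>2"
    and k: "k < T"
  shows "ddim_back T \<beta> \<sigma> y0 f k = iso_normal (card_mean \<beta> y0 f (T - k)) (1 - alpha_bar \<beta> (T - k))"
  using k
proof (induction k)
  case 0
  then show ?case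
    by simp
next
  case (Suc k)
  let ?t = "T - k"
  have t: "2 \<le> ?t" "?t \<le> T" and t_pred: "T - Suc k = ?t - 1"
    using Suc.prems by auto
  have alpha_bar_lt: "alpha_bar \<beta> s < 1" if "1 \<le> s" "s \<le> T" for s
    using alpha_bar_less_one[of s \<beta>] \<beta> that by auto
  have "ddim_back T \<beta> \<sigma> y0 f (Suc k)
      = iso_normal (card_mean \<beta> y0 f ?t) (1 - alpha_bar \<beta> ?t)
          \<bind> (\<lambda>y. iso_normal (card_mu \<beta> \<sigma> y0 f ?t y) ((\<sigma> ?t)\<^sup>2))"
    using Suc by simp
  also have "\<dots> = iso_normal (card_mean \<beta> y0 f (?t - 1)) (1 - alpha_bar \<beta> (?t - 1))"
    using t \<sigma>[OF t] by (intro bind_card_mu_kernel alpha_bar_lt) auto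
  finally show ?case
    by (simp only: t_pred)
qed

theorem mainTheorem4:
  fixes T :: nat and \<beta> \<sigma> :: "nat \<Rightarrow> real" and y0 f :: "real^'d"
  assumes beta: "\<And>t. 1 \<le> t \<Longrightarrow> t \<le> T \<Longrightarrow> 0 < \<beta> t \<and> \<beta> t < 1"
    and sigma_nonneg: "\<And>t. 2 \<le> t \<Longrightarrow> t \<le> T \<Longrightarrow> 0 \<le> \<sigma> t"
    and sigma_le: "\<And>t. 2 \<le> t \<Longrightarrow> t \<le> T \<Longrightarrow> 0 \<le> 1 - alpha_bar \<beta> (t - 1) - (\<sigma> t)^2"
  shows "\<forall>t. 1 \<le> t \<and> t \<le> T \<longrightarrow>
    ddim_marginal T \<beta> \<sigma> y0 f t = iso_normal (card_mean \<beta> y0 f t) (1 - alpha_bar \<beta> t)"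
proof (intro allI impI)
  fix t assume "1 \<le> t \<and> t \<le> T"
  then have "T - t < T" "T - (T - t) = t"
    by auto
  then show "ddim_marginal T \<beta> \<sigma> y0 f t = iso_normal (card_mean \<beta> y0 f t) (1 - alpha_bar \<beta> t)"
    using ddim_back_eq_iso_normal[OF beta sigma_le \<open>T - t < T\<close>] by (simp add: ddim_marginal_def)
qed

end
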